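(* Let $G$ be a graph with a vertex $r$ that belongs to no minimum vertex cover of $G$ (so $\mathrm{OPT}(G-r)=\mathrm{OPT}(G)$), and let $Y$ be a minimal blocking set of $G$ with $r\notin Y$. Then there exists a (possibly empty) set $Z\subseteq N(r)$ such that $Y\cup Z$ is a minimal blocking set of $G-r$.
   Context: $\mathrm{OPT}(G)$ is the minimum vertex cover size; minimum vertex covers have size $\mathrm{OPT}(G)$. $Y\subseteq V(G)$ is a blocking set if no minimum vertex cover contains $Y$; minimal if no proper subset is. $N(r)$ is the set of neighbors of $r$. *)

theory Defs
  imports Main
begin

definition graph :: "'a set \<Rightarrow> 'a set set \<Rightarrow> bool" where
  "graph V E \<longleftrightarrow> finite V \<and> (\<forall>e\<in>E. e \<subseteq> V \<and> card e = 2)"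

definition vertex_cover :: "'a set \<Rightarrow> 'a set set \<Rightarrow> 'a set \<Rightarrow> bool" where
  "vertex_cover V E C \<longleftrightarrow> C \<subseteq> V \<and> (\<forall>e\<in>E. e \<inter> C \<noteq> {})"

definition OPT :: "'a set \<Rightarrow> 'a set set \<Rightarrow> nat" where
  "OPT V E = (LEAST k. \<exists>C. vertex_cover V E C \<and> card C = k)"

definition min_vertex_cover :: "'a set \<Rightarrow> 'a set set \<Rightarrow> 'a set \<Rightarrow> bool" where
  "min_vertex_cover V E C \<longleftrightarrow> vertex_cover V E C \<and> card C = OPT V E"

definition blocking :: "'a set \<Rightarrow> 'a set set \<Rightarrow> 'a set \<Rightarrow> bool" where
  "blocking V E Y \<longleftrightarrow> Y \<subseteq> V \<and> \<not> (\<exists>C. min_vertex_cover V E C \<and> Y \<subseteq> C)"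

definition minimal_blocking :: "'a set \<Rightarrow> 'a set set \<Rightarrow> 'a set \<Rightarrow> bool" where
  "minimal_blocking V E Y \<longleftrightarrow> blocking V E Y \<and> (\<forall>Y'. Y' \<subset> Y \<longrightarrow> \<not> blocking V E Y')"

definition nbrs :: "'a set set \<Rightarrow> 'a \<Rightarrow> 'a set" where
  "nbrs E r = {v. {r, v} \<in> E}"

definition del_V :: "'a set \<Rightarrow> 'a \<Rightarrow> 'a set" where
  "del_V V r = V - {r}"

definition del_E :: "'a set set \<Rightarrow> 'a \<Rightarrow> 'a set set" where
  "del_E E r = {e \<in> E. r \<notin> e}"

end

theory Submission
  imports Defs
begin

text \<open>
  Since r lies in no minimum vertex cover, deleting r does not lower the optimum, and the minimum
  vertex covers of G are exactly the minimum vertex covers of G - r that contain N(r).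
  Hence Y \<union> N(r) blocks G - r; an inclusion-minimal Z \<subseteq> N(r) for which Y \<union> Z still blocks
  G - r makes Y \<union> Z minimal: dropping a vertex of Z is excluded by the choice of Z, and dropping
  a vertex x of Y leaves a set contained in a minimum cover of G extending Y - {x}, which is a
  minimum cover of G - r containing N(r) \<supseteq> Z.
\<close>

lemma OPT_le_card:
  assumes "vertex_cover V E C"
  shows "OPT V E \<le> card C"
  unfolding OPT_def by (rule Least_le) (use assms in blast)

lemma min_vertex_cover_exists:
  assumes "vertex_cover V E C"
  shows "\<exists>C. min_vertex_cover V E C"
proof -
  have "\<exists>C. vertex_cover V E C \<and> card C = OPT V E"
    unfolding OPT_def by (rule LeastI_ex) (use assms in blast)
  then show ?thesis
    unfolding min_vertex_cover_def by blast
qed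

lemma graph_vertex_cover_self:
  assumes "graph V E"
  shows "vertex_cover V E V"
  using assms unfolding graph_def vertex_cover_def by (fastforce simp: card_2_iff)

lemma min_vertex_cover_not_blocking:
  assumes "min_vertex_cover V E C" and "Y \<subseteq> C"
  shows "\<not> blocking V E Y"
  using assms unfolding blocking_def by blast

lemma minimal_blockingI:
  assumes "blocking V E Y"
    and "\<And>x. x \<in> Y \<Longrightarrow> \<exists>C. min_vertex_cover V E C \<and> Y - {x} \<subseteq> C"
  shows "minimal_blocking V E Y"
  unfolding minimal_blocking_def
proof (intro conjI allI impI)
  fix Y' assume "Y' \<subset> Y"
  then obtain x where "x \<in> Y" and "Y' \<subseteq> Y - {x}"
    by blast
  with assms(2) show "\<not> blocking V E Y'"
    by (meson min_vertex_cover_not_blocking order_trans)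
qed (fact assms(1))

lemma nbrs_subset_del_V:
  assumes "graph V E"
  shows "nbrs E r \<subseteq> del_V V r"
proof
  fix v assume "v \<in> nbrs E r"
  then have "{r, v} \<subseteq> V" and "card {r, v} = 2"
    using assms unfolding graph_def nbrs_def by auto
  then show "v \<in> del_V V r"
    unfolding del_V_def by (cases "v = r") auto
qed

lemma vertex_cover_del:
  assumes "vertex_cover V E C" and "r \<notin> C"
  shows "vertex_cover (del_V V r) (del_E E r) C" and "nbrs E r \<subseteq> C"
  using assms unfolding vertex_cover_def del_V_def del_E_def nbrs_def by fastforce+

lemma vertex_cover_of_del:
  assumes "graph V E"
    and "vertex_cover (del_V V r) (del_E E r) C" and "nbrs E r \<subseteq> C"
  shows "vertex_cover V E C"
  unfolding vertex_cover_def
proof (intro conjI ballI)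
  show "C \<subseteq> V"
    using assms(2) unfolding vertex_cover_def del_V_def by auto
next
  fix e assume e: "e \<in> E"
  show "e \<inter> C \<noteq> {}"
  proof (cases "r \<in> e")
    case False
    then show ?thesis
      using assms(2) e unfolding vertex_cover_def del_E_def by auto
  next
    case True
    from e assms(1) obtain x y where "e = {x, y}"
      unfolding graph_def by (auto simp: card_2_iff)
    with True obtain v where "e = {r, v}"
      by blast
    with e assms(3) show ?thesis
      unfolding nbrs_def by auto
  qed
qed

lemma vertex_cover_insert_del:
  assumes "r \<in> V" and "vertex_cover (del_V V r) (del_E E r) C"
  shows "vertex_cover V E (insert r C)"
  using assms unfolding vertex_cover_def del_V_def del_E_def by auto

text \<open>Otherwise a minimum cover of G - r plus r would be a minimum cover of G containing r.\<close>
lemma OPT_del_eq: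
  assumes "graph V E" and "r \<in> V"
    and avoid: "\<And>C. min_vertex_cover V E C \<Longrightarrow> r \<notin> C"
  shows "OPT (del_V V r) (del_E E r) = OPT V E"
proof -
  obtain C0 where C0: "min_vertex_cover V E C0"
    using min_vertex_cover_exists[OF graph_vertex_cover_self[OF assms(1)]] by blast
  then have "vertex_cover V E C0" and "card C0 = OPT V E" and "r \<notin> C0"
    using avoid unfolding min_vertex_cover_def by auto
  have cover0: "vertex_cover (del_V V r) (del_E E r) C0"
    using \<open>vertex_cover V E C0\<close> \<open>r \<notin> C0\<close> by (rule vertex_cover_del)
  have le: "OPT (del_V V r) (del_E E r) \<le> OPT V E"
    using OPT_le_card[OF cover0] \<open>card C0 = OPT V E\<close> by simp
  obtain C1 where C1: "min_vertex_cover (del_V V r) (del_E E r) C1"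
    using min_vertex_cover_exists[OF cover0] by blast
  then have "C1 \<subseteq> V - {r}"
    unfolding min_vertex_cover_def vertex_cover_def del_V_def by auto
  then have "r \<notin> C1" and "finite C1"
    using assms(1) finite_subset unfolding graph_def by auto
  then have card_insert: "card (insert r C1) = OPT (del_V V r) (del_E E r) + 1"
    using C1 unfolding min_vertex_cover_def by simp
  have cover_insert: "vertex_cover V E (insert r C1)"
    using vertex_cover_insert_del[OF assms(2)] C1 unfolding min_vertex_cover_def by blast
  have "\<not> min_vertex_cover V E (insert r C1)"
    using avoid by blast
  then have "OPT V E < card (insert r C1)"
    using OPT_le_card[OF cover_insert] cover_insert
    unfolding min_vertex_cover_def by linarith
  with le card_insert show ?thesis
    by linarith
qed

lemma min_vertex_cover_del_iff:
  assumes "graph V E" and "r \<in> V"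
    and avoid: "\<And>C. min_vertex_cover V E C \<Longrightarrow> r \<notin> C"
  shows "min_vertex_cover V E C \<longleftrightarrow>
    min_vertex_cover (del_V V r) (del_E E r) C \<and> nbrs E r \<subseteq> C"
proof
  assume C: "min_vertex_cover V E C"
  then have "vertex_cover V E C" and "r \<notin> C"
    using avoid unfolding min_vertex_cover_def by auto
  with C OPT_del_eq[OF assms] show "min_vertex_cover (del_V V r) (del_E E r) C \<and> nbrs E r \<subseteq> C"
    using vertex_cover_del unfolding min_vertex_cover_def by metis
next
  assume "min_vertex_cover (del_V V r) (del_E E r) C \<and> nbrs E r \<subseteq> C"
  with OPT_del_eq[OF assms] show "min_vertex_cover V E C"
    using vertex_cover_of_del[OF assms(1)] unfolding min_vertex_cover_def by metis
qed

lemma minimal_blocking_extend: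
  assumes covers: "\<And>C. min_vertex_cover V E C \<longleftrightarrow> min_vertex_cover V' E' C \<and> N \<subseteq> C"
    and "finite N" and "N \<subseteq> V'"
    and Y: "minimal_blocking V E Y" and "Y \<subseteq> V'"
  shows "\<exists>Z. Z \<subseteq> N \<and> minimal_blocking V' E' (Y \<union> Z)"
proof -
  let ?Zs = "{Z. Z \<subseteq> N \<and> blocking V' E' (Y \<union> Z)}"
  have "blocking V E Y"
    using Y unfolding minimal_blocking_def by blast
  then have "\<not> min_vertex_cover V' E' C" if "Y \<union> N \<subseteq> C" for C
    using covers that unfolding blocking_def by blast
  moreover have "Y \<union> N \<subseteq> V'"
    using \<open>N \<subseteq> V'\<close> \<open>Y \<subseteq> V'\<close> by blast
  ultimately have "N \<in> ?Zs"
    unfolding blocking_def by blast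
  moreover have "finite ?Zs"
    by (rule finite_subset[of _ "Pow N"]) (use \<open>finite N\<close> in auto)
  ultimately obtain Z where "Z \<in> ?Zs" and Z_min: "\<forall>Z'\<in>?Zs. Z' \<subseteq> Z \<longrightarrow> Z = Z'"
    using finite_has_minimal[of ?Zs] by blast
  then have "Z \<subseteq> N" and blocks: "blocking V' E' (Y \<union> Z)"
    by auto
  have smaller: "\<not> blocking V' E' (Y \<union> Z')" if "Z' \<subset> Z" for Z'
    using Z_min that \<open>Z \<subseteq> N\<close> by blast
  have "minimal_blocking V' E' (Y \<union> Z)"
  proof (rule minimal_blockingI[OF blocks])
    fix x assume "x \<in> Y \<union> Z"
    show "\<exists>C. min_vertex_cover V' E' C \<and> Y \<union> Z - {x} \<subseteq> C"
    proof (cases "x \<in> Y")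
      case True
      have "\<not> blocking V E (Y - {x})"
        using Y True unfolding minimal_blocking_def by blast
      moreover have "Y - {x} \<subseteq> V"
        using \<open>blocking V E Y\<close> unfolding blocking_def by blast
      ultimately obtain C where "min_vertex_cover V E C" and "Y - {x} \<subseteq> C"
        unfolding blocking_def by blast
      with covers \<open>Z \<subseteq> N\<close> show ?thesis
        by blast
    next
      case False
      with \<open>x \<in> Y \<union> Z\<close> have "\<not> blocking V' E' (Y \<union> (Z - {x}))"
        by (intro smaller) blast
      moreover have "Y \<union> (Z - {x}) \<subseteq> V'"
        using \<open>Y \<subseteq> V'\<close> \<open>Z \<subseteq> N\<close> \<open>N \<subseteq> V'\<close> by blast
      moreover have "Y \<union> Z - {x} = Y \<union> (Z - {x})"
        using False by blast
      ultimately show ?thesis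
        unfolding blocking_def by auto
    qed
  qed
  with \<open>Z \<subseteq> N\<close> show ?thesis
    by blast
qed

theorem mainTheorem18:
  fixes V :: "'a set" and E :: "'a set set" and r :: 'a and Y :: "'a set"
  assumes "graph V E"
    and "r \<in> V"
    and "\<forall>C. min_vertex_cover V E C \<longrightarrow> r \<notin> C"
    and "minimal_blocking V E Y"
    and "r \<notin> Y"
  shows "\<exists>Z. Z \<subseteq> nbrs E r \<and> minimal_blocking (del_V V r) (del_E E r) (Y \<union> Z)"
proof (rule minimal_blocking_extend[OF _ _ _ assms(4)])
  have avoid: "\<And>C. min_vertex_cover V E C \<Longrightarrow> r \<notin> C"
    using assms(3) by blast
  show "min_vertex_cover V E C \<longleftrightarrow>
      min_vertex_cover (del_V V r) (del_E E r) C \<and> nbrs E r \<subseteq> C" for C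
    by (rule min_vertex_cover_del_iff[OF assms(1,2) avoid])
  show "nbrs E r \<subseteq> del_V V r"
    by (rule nbrs_subset_del_V[OF assms(1)])
  moreover have "finite (del_V V r)"
    using assms(1) unfolding graph_def del_V_def by simp
  ultimately show "finite (nbrs E r)"
    by (rule finite_subset)
  show "Y \<subseteq> del_V V r"
    using assms(4,5) unfolding minimal_blocking_def blocking_def del_V_def by blast
qed

end
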